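(* Let $\alpha>0$, $t_0>0$ and $x_0,v_0\in\mathcal H$. Assume $(u(\cdot),v(\cdot)):[t_0,+\infty)\to\mathcal H\times\mathcal H$ is absolutely continuous on every compact subinterval and solves the differential inclusion $$(\dot u(t),\dot v(t))\in G(t,u(t),v(t))\ \text{ for almost all }t>t_0,\qquad (u(t_0),v(t_0))=(x_0,v_0),$$ where $G(t,u,v)=\{v\}\times\big(-\frac{\alpha}{t}v-\arg\min_{g\in C(u)}\langle g,-v\rangle\big)$. Then $x(t):=u(t)$ satisfies $$\tfrac{\alpha}{t}\dot x(t)+\operatorname{proj}_{C(x(t))+\ddot x(t)}(0)=0$$ for almost all $t\in[t_0,+\infty)$, where $\dot x=v$ and $\ddot x=\dot v$, together with $x(t_0)=x_0$ and $\dot x(t_0)=v_0$.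
   Context: $\mathcal H$ is a real Hilbert space. $f_1,\dots,f_m:\mathcal H\to\mathbb R$ are convex and continuously differentiable. $C(u)=\operatorname{co}\{\nabla f_i(u):i=1,\dots,m\}$. For a closed convex $K$, $\operatorname{proj}_K(y)=\arg\min_{w\in K}\|w-y\|^2$. *)

theory Defs
  imports "HOL-Analysis.Analysis"
begin

definition abs_continuous_on :: "real \<Rightarrow> real \<Rightarrow> (real \<Rightarrow> 'a::real_normed_vector) \<Rightarrow> bool" where
  "abs_continuous_on a b f \<longleftrightarrow>
     (\<forall>\<epsilon>>0. \<exists>\<delta>>0. \<forall>(n::nat) (l::nat \<Rightarrow> real) (r::nat \<Rightarrow> real).
        (\<forall>k<n. a \<le> l k \<and> l k \<le> r k \<and> r k \<le> b) \<longrightarrow>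
        (\<forall>j<n. \<forall>k<n. j \<noteq> k \<longrightarrow> {l j<..<r j} \<inter> {l k<..<r k} = {}) \<longrightarrow>
        (\<Sum>k<n. r k - l k) < \<delta> \<longrightarrow>
        (\<Sum>k<n. norm (f (r k) - f (l k))) < \<epsilon>)"

definition argmin_set :: "('a \<Rightarrow> real) \<Rightarrow> 'a set \<Rightarrow> 'a set" where
  "argmin_set \<phi> K = {g \<in> K. \<forall>h\<in>K. \<phi> g \<le> \<phi> h}"

definition proj :: "'a::real_inner set \<Rightarrow> 'a \<Rightarrow> 'a" where
  "proj K y = (THE w. w \<in> K \<and> (\<forall>z\<in>K. (norm (w - y))\<^sup>2 \<le> (norm (z - y))\<^sup>2))"

text \<open>C(u) = co{grad f_i(u) : i = 1..m}, indices shifted to 0..m-1.\<close>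
definition Cset :: "nat \<Rightarrow> (nat \<Rightarrow> 'a \<Rightarrow> 'a::real_inner) \<Rightarrow> 'a \<Rightarrow> 'a set" where
  "Cset m grad u = convex hull {grad i u | i. i < m}"

definition Gsecond :: "real \<Rightarrow> nat \<Rightarrow> (nat \<Rightarrow> 'a \<Rightarrow> 'a::real_inner) \<Rightarrow> real \<Rightarrow> 'a \<Rightarrow> 'a \<Rightarrow> 'a set" where
  "Gsecond \<alpha> m grad t u v =
     (\<lambda>g. - (\<alpha> / t) *\<^sub>R v - g) ` argmin_set (\<lambda>g. inner g (- v)) (Cset m grad u)"

end

theory Submission
  imports Defs
begin

text \<open>Wherever the inclusion holds, \<open>v' = -(\<alpha>/t) v - g\<close> with \<open>g\<close> minimising
  \<open>\<langle>\<cdot>, -v\<rangle>\<close> over \<open>C(u)\<close>. The set \<open>C(u) + v'\<close> then contains \<open>p = g + v' = -(\<alpha>/t) v\<close>, and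
  \<open>\<langle>p, z - p\<rangle> = (\<alpha>/t) \<langle>h - g, -v\<rangle> \<ge> 0\<close> for every \<open>z = h + v'\<close> in it, so \<open>p\<close> is the
  projection of \<open>0\<close>.\<close>

lemma proj_eqI:
  fixes K :: "'a::real_inner set"
  assumes "p \<in> K" and obtuse: "\<And>z. z \<in> K \<Longrightarrow> inner (p - y) (z - p) \<ge> 0"
  shows "proj K y = p"
proof -
  have expand: "(norm (z - y))\<^sup>2 = (norm (p - y))\<^sup>2 + 2 * inner (p - y) (z - p) + (norm (z - p))\<^sup>2"
    for z :: 'a
  proof -
    have "z - y = (p - y) + (z - p)" by simp
    then show ?thesis
      by (simp only: power2_norm_eq_inner inner_add_left inner_add_right inner_commute)
  qed
  have minimal: "(norm (p - y))\<^sup>2 \<le> (norm (z - y))\<^sup>2" if "z \<in> K" for z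
    using expand[of z] obtuse[OF that] by simp
  have unique: "q = p" if "q \<in> K" and "\<forall>z\<in>K. (norm (q - y))\<^sup>2 \<le> (norm (z - y))\<^sup>2" for q
  proof -
    have "(norm (q - y))\<^sup>2 \<le> (norm (p - y))\<^sup>2" using that \<open>p \<in> K\<close> by blast
    then have "(norm (q - p))\<^sup>2 \<le> 0" using expand[of q] obtuse[OF \<open>q \<in> K\<close>] by linarith
    then show "q = p" by simp
  qed
  show ?thesis
    unfolding proj_def using \<open>p \<in> K\<close> minimal unique by (intro the_equality) blast+
qed

lemma proj_zero_translate_argmin:
  fixes C :: "'a::real_inner set"
  assumes "c > 0" and g: "g \<in> argmin_set (\<lambda>h. inner h (- v)) C"
  shows "proj ((\<lambda>x. x + (- c *\<^sub>R v - g)) ` C) 0 = - c *\<^sub>R v"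
proof (rule proj_eqI)
  from g have "g \<in> C" by (simp add: argmin_set_def)
  then show "- c *\<^sub>R v \<in> (\<lambda>x. x + (- c *\<^sub>R v - g)) ` C"
    by (intro image_eqI[of _ _ g]) simp_all
next
  fix z assume "z \<in> (\<lambda>x. x + (- c *\<^sub>R v - g)) ` C"
  then obtain h where "h \<in> C" and z: "z = h + (- c *\<^sub>R v - g)" by blast
  with g have "0 \<le> inner (h - g) (- v)"
    by (simp add: argmin_set_def inner_diff_left)
  with \<open>c > 0\<close> have "0 \<le> c * inner (h - g) (- v)" by (intro mult_nonneg_nonneg) simp_all
  then show "0 \<le> inner (- c *\<^sub>R v - 0) (z - - c *\<^sub>R v)"
    by (simp add: z inner_commute)
qed

lemma Gsecond_proj_eq_zero:
  assumes "\<alpha> / t > 0" and "w \<in> Gsecond \<alpha> m grad t x v"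
  shows "(\<alpha> / t) *\<^sub>R v + proj ((\<lambda>c. c + w) ` Cset m grad x) 0 = 0"
proof -
  from assms(2) obtain g where g: "g \<in> argmin_set (\<lambda>h. inner h (- v)) (Cset m grad x)"
    and w: "w = - (\<alpha> / t) *\<^sub>R v - g"
    unfolding Gsecond_def by auto
  show ?thesis
    using proj_zero_translate_argmin[OF assms(1) g] by (simp add: w)
qed

theorem theorem3p9:
  fixes f :: "nat \<Rightarrow> 'a::{real_inner, complete_space} \<Rightarrow> real"
    and grad :: "nat \<Rightarrow> 'a \<Rightarrow> 'a"
    and m :: nat
    and \<alpha> t0 :: real
    and x0 v0 :: 'a
    and u v :: "real \<Rightarrow> 'a"
  assumes convex_f: "\<And>i. i < m \<Longrightarrow> convex_on UNIV (f i)"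
    and grad_f: "\<And>i x. i < m \<Longrightarrow> (f i has_derivative (\<lambda>h. inner (grad i x) h)) (at x)"
    and grad_cont: "\<And>i. i < m \<Longrightarrow> continuous_on UNIV (grad i)"
    and m_pos: "m > 0"
    and alpha_pos: "\<alpha> > 0"
    and t0_pos: "t0 > 0"
    and ac_u: "\<And>b. b \<ge> t0 \<Longrightarrow> abs_continuous_on t0 b u"
    and ac_v: "\<And>b. b \<ge> t0 \<Longrightarrow> abs_continuous_on t0 b v"
    and incl: "AE t in lborel. t > t0 \<longrightarrow>
                 (u has_vector_derivative v t) (at t) \<and>
                 (\<exists>w. (v has_vector_derivative w) (at t) \<and> w \<in> Gsecond \<alpha> m grad t (u t) (v t))"
    and init: "u t0 = x0" "v t0 = v0"
  shows "(AE t in lborel. t \<ge> t0 \<longrightarrow>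
            (u has_vector_derivative v t) (at t) \<and>
            (\<exists>w. (v has_vector_derivative w) (at t) \<and>
                 (\<alpha> / t) *\<^sub>R v t + proj ((\<lambda>c. c + w) ` Cset m grad (u t)) 0 = 0))
         \<and> u t0 = x0 \<and> v t0 = v0"
proof -
  have "AE t in lborel. t \<ge> t0 \<longrightarrow>
          (u has_vector_derivative v t) (at t) \<and>
          (\<exists>w. (v has_vector_derivative w) (at t) \<and>
               (\<alpha> / t) *\<^sub>R v t + proj ((\<lambda>c. c + w) ` Cset m grad (u t)) 0 = 0)"
    using incl AE_lborel_singleton[of t0]
  proof eventually_elim
    case (elim t)
    show ?case
    proof
      assume "t \<ge> t0"
      with elim(2) have "t > t0" by simp
      with alpha_pos t0_pos have "\<alpha> / t > 0" by simp
      with elim(1) \<open>t > t0\<close> Gsecond_proj_eq_zero show "(u has_vector_derivative v t) (at t) \<and>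
          (\<exists>w. (v has_vector_derivative w) (at t) \<and>
               (\<alpha> / t) *\<^sub>R v t + proj ((\<lambda>c. c + w) ` Cset m grad (u t)) 0 = 0)"
        by blast
    qed
  qed
  with init show ?thesis by simp
qed

end
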